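(* For any weighted undirected graph $G=(V,E,w)$, let $\mathcal T_{\mathrm{bal}}$ be any HC-tree obtained by the recursive $\frac13$-balanced min-cut procedure on $G$. Then $C_G(\mathcal T_{\mathrm{bal}})\le 9\cdot\mathrm{OPT}(G)$.
   Context: Let $G=(V,E,w)$ be an undirected graph with nonnegative edge weights. A hierarchical clustering tree (HC-tree) of $G$ is a rooted tree $\mathcal T$ whose leaves are in bijection with $V$. For a node $z$, $\mathcal T[z]$ is the subtree rooted at $z$ and $\mathrm{leaves}(\mathcal T[z])$ its set of leaves; $u\vee v$ is the lowest common ancestor of $u,v$. The cost is $C_G(\mathcal T)=\sum_{(u,v)\in E} w(u,v)\,|\mathrm{leaves}(\mathcal T[u\vee v])|$ and $\mathrm{OPT}(G)=\min_{\mathcal T}C_G(\mathcal T)$. For disjoint $A,B\subseteq V$, $w(A,B)$ is the total weight of edges between $A$ and $B$. If $\mathcal T$ is binary and $z$ is internal with children $z_1,z_2$, $|\mathrm{leaves}(\mathcal T[z_1])|\le|\mathrm{leaves}(\mathcal T[z_2])|$, then $\mathrm{cut}(\mathcal T[z])=(\mathrm{leaves}(\mathcal T[z_1]),\mathrm{leaves}(\mathcal T[z_2]))$. A pair of disjoint sets $(A,B)$ is $\beta$-balanced if $\max\{|A|,|B|\}\le(1-\beta)|A\cup B|$. The recursive $\beta$-balanced min-cut procedure produces a binary HC-tree in which, for every internal node $z$ with $S=\mathrm{leaves}(\mathcal T[z])$, the partition $\mathrm{cut}(\mathcal T[z])=(A,B)$ of $S$ is $\beta$-balanced and minimizes $w(A,B)$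 among all $\beta$-balanced partitions of $S$ into two parts (ties broken arbitrarily). *)

theory Defs
  imports Complex_Main
begin

definition wgraph :: "'a set \<Rightarrow> 'a set set \<Rightarrow> ('a set \<Rightarrow> real) \<Rightarrow> bool" where
  "wgraph V E w \<longleftrightarrow> finite V \<and> (\<forall>e\<in>E. e \<subseteq> V \<and> card e = 2 \<and> w e \<ge> 0)"

definition cut_weight :: "'a set set \<Rightarrow> ('a set \<Rightarrow> real) \<Rightarrow> 'a set \<Rightarrow> 'a set \<Rightarrow> real" where
  "cut_weight E w A B = (\<Sum>e\<in>{e\<in>E. e \<inter> A \<noteq> {} \<and> e \<inter> B \<noteq> {}}. w e)"

datatype 'a hctree = Leaf 'a | Node "'a hctree list"

fun leaves :: "'a hctree \<Rightarrow> 'a list" where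
  "leaves (Leaf x) = [x]"
| "leaves (Node ts) = concat (map leaves ts)"

abbreviation leafset :: "'a hctree \<Rightarrow> 'a set" where
  "leafset t \<equiv> set (leaves t)"

fun children :: "'a hctree \<Rightarrow> 'a hctree list" where
  "children (Leaf x) = []"
| "children (Node ts) = ts"

text \<open>Internal nodes have at least one child (so that every leaf of the rooted tree is a
  labelled Leaf).\<close>
fun wf_tree :: "'a hctree \<Rightarrow> bool" where
  "wf_tree (Leaf x) = True"
| "wf_tree (Node ts) = (ts \<noteq> [] \<and> (\<forall>t\<in>set ts. wf_tree t))"

definition hc_tree :: "'a set \<Rightarrow> 'a hctree \<Rightarrow> bool" where
  "hc_tree V T \<longleftrightarrow> wf_tree T \<and> distinct (leaves T) \<and> leafset T = V"

fun subtrees :: "'a hctree \<Rightarrow> 'a hctree set" where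
  "subtrees (Leaf x) = {Leaf x}"
| "subtrees (Node ts) = insert (Node ts) (\<Union>t\<in>set ts. subtrees t)"

text \<open>T[u \<or> v]: the subtree rooted at the lowest common ancestor of u and v, i.e. the
  common ancestor none of whose children is a common ancestor.\<close>
definition lca_subtree :: "'a hctree \<Rightarrow> 'a \<Rightarrow> 'a \<Rightarrow> 'a hctree" where
  "lca_subtree T u v = (THE s. s \<in> subtrees T \<and> {u, v} \<subseteq> leafset s \<and>
      (\<forall>c\<in>set (children s). \<not> {u, v} \<subseteq> leafset c))"

definition edge_lca :: "'a hctree \<Rightarrow> 'a set \<Rightarrow> 'a hctree" where
  "edge_lca T e = (THE s. \<exists>u v. e = {u, v} \<and> u \<noteq> v \<and> s = lca_subtree T u v)"

definition hc_cost :: "'a set set \<Rightarrow> ('a set \<Rightarrow> real) \<Rightarrow> 'a hctree \<Rightarrow> real" where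
  "hc_cost E w T = (\<Sum>e\<in>E. w e * real (card (leafset (edge_lca T e))))"

definition OPT :: "'a set \<Rightarrow> 'a set set \<Rightarrow> ('a set \<Rightarrow> real) \<Rightarrow> real" where
  "OPT V E w = (INF T\<in>{T. hc_tree V T}. hc_cost E w T)"

definition balanced :: "real \<Rightarrow> 'a set \<Rightarrow> 'a set \<Rightarrow> bool" where
  "balanced \<beta> A B \<longleftrightarrow> real (max (card A) (card B)) \<le> (1 - \<beta>) * real (card (A \<union> B))"

fun bal_mincut_tree :: "real \<Rightarrow> 'a set set \<Rightarrow> ('a set \<Rightarrow> real) \<Rightarrow> 'a hctree \<Rightarrow> bool" where
  "bal_mincut_tree \<beta> E w (Leaf x) = True"
| "bal_mincut_tree \<beta> E w (Node ts) =
     (case ts of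
        [t1, t2] \<Rightarrow>
          balanced \<beta> (leafset t1) (leafset t2) \<and>
          (\<forall>A B. A \<inter> B = {} \<and> A \<union> B = leafset (Node ts) \<and> balanced \<beta> A B \<longrightarrow>
                 cut_weight E w (leafset t1) (leafset t2) \<le> cut_weight E w A B) \<and>
          bal_mincut_tree \<beta> E w t1 \<and> bal_mincut_tree \<beta> E w t2
      | _ \<Rightarrow> False)"

end

theory Submission
  imports Defs
begin

text \<open>Fix any HC-tree Ts of G and write L(e) for the number of leaves below the LCA of the edge e
  in Ts. Let S be the leaf set of a node of the balanced tree. Walking down Ts to a lowest node
  holding more than 2|S|/3 points of S and grouping the shares of S among its children yields a
  1/3-balanced partition of S whose crossing edges all satisfy 2|S| < 3 L(e). By minimality, the
  cut at the node weighs at most the total weight of such far edges inside S.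
  By induction, the cost the balanced tree pays for edges inside S is at most the budget
  sum of w(e) min(3|S|, 9 L(e)) over those edges: the children have at most 2|S|/3 leaves, so
  for a far edge (where 9 L(e) > 6|S|) their budgets leave room for the |S| w(e) paid at the node.
  At the root the budget is at most 9 C_G(Ts).\<close>

lemma subtrees_self: "T \<in> subtrees T"
  by (cases T) auto

lemma leafset_subtree: "s \<in> subtrees T \<Longrightarrow> leafset s \<subseteq> leafset T"
  by (induction T rule: subtrees.induct) auto

lemma subtrees_trans: "s \<in> subtrees T \<Longrightarrow> r \<in> subtrees s \<Longrightarrow> r \<in> subtrees T"
  by (induction T rule: subtrees.induct) auto

lemma distinct_leaves_subtree: "s \<in> subtrees T \<Longrightarrow> distinct (leaves T) \<Longrightarrow> distinct (leaves s)"
  by (induction T rule: subtrees.induct) (auto simp: distinct_concat_iff)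

lemma child_eq_if_common_leaf:
  assumes "distinct (leaves (Node ts))" "c \<in> set ts" "c' \<in> set ts" "x \<in> leafset c" "x \<in> leafset c'"
  shows "c = c'"
  using assms by (induction ts) auto

definition is_lca :: "'a hctree \<Rightarrow> 'a set \<Rightarrow> 'a hctree \<Rightarrow> bool" where
  "is_lca T X s \<longleftrightarrow> s \<in> subtrees T \<and> X \<subseteq> leafset s \<and> (\<forall>c\<in>set (children s). \<not> X \<subseteq> leafset c)"

definition lca :: "'a hctree \<Rightarrow> 'a set \<Rightarrow> 'a hctree" where
  "lca T X = (THE s. is_lca T X s)"

lemma lca_child:
  assumes dist: "distinct (leaves (Node ts))" and c: "c \<in> set ts" "X \<subseteq> leafset c" and "X \<noteq> {}"
  shows "lca (Node ts) X = lca c X"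
proof -
  obtain x where x: "x \<in> X" using \<open>X \<noteq> {}\<close> by auto
  have "is_lca (Node ts) X s \<longleftrightarrow> is_lca c X s" for s
  proof
    assume s: "is_lca (Node ts) X s"
    then have "s \<noteq> Node ts" using c by (auto simp: is_lca_def)
    then obtain c' where c': "c' \<in> set ts" "s \<in> subtrees c'" using s by (auto simp: is_lca_def)
    have "x \<in> leafset c'" using leafset_subtree[OF c'(2)] s x by (auto simp: is_lca_def)
    then have "c' = c" using child_eq_if_common_leaf[OF dist c'(1) c(1)] x c(2) by auto
    then show "is_lca c X s" using s c' by (auto simp: is_lca_def)
  qed (use c in \<open>auto simp: is_lca_def\<close>)
  then show ?thesis by (simp add: lca_def)
qed

lemma lca_root:
  assumes "X \<subseteq> leafset (Node ts)" "\<forall>c\<in>set ts. \<not> X \<subseteq> leafset c"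
  shows "lca (Node ts) X = Node ts"
  unfolding lca_def
proof (rule the_equality)
  fix s assume s: "is_lca (Node ts) X s"
  show "s = Node ts"
  proof (rule ccontr)
    assume "s \<noteq> Node ts"
    then obtain c where "c \<in> set ts" "s \<in> subtrees c" using s by (auto simp: is_lca_def)
    then show False using leafset_subtree s assms(2) by (fastforce simp: is_lca_def)
  qed
qed (use assms in \<open>auto simp: is_lca_def\<close>)

lemma lca_Leaf: "X \<subseteq> {x} \<Longrightarrow> lca (Leaf x) X = Leaf x"
  unfolding lca_def by (rule the_equality) (auto simp: is_lca_def)

lemma subtree_lca:
  "distinct (leaves T) \<Longrightarrow> t \<in> subtrees T \<Longrightarrow> X \<subseteq> leafset T \<Longrightarrow> X \<inter> leafset t \<noteq> {} \<Longrightarrow>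
    \<forall>c\<in>set (children t). \<not> X \<subseteq> leafset c \<Longrightarrow> t \<in> subtrees (lca T X)"
proof (induction T arbitrary: t)
  case (Leaf x)
  then show ?case by (simp add: lca_Leaf)
next
  case (Node ts)
  show ?case
  proof (cases "\<exists>c\<in>set ts. X \<subseteq> leafset c")
    case True
    then obtain c where c: "c \<in> set ts" "X \<subseteq> leafset c" by auto
    obtain x where x: "x \<in> X" "x \<in> leafset t" using Node.prems(4) by auto
    have "t \<noteq> Node ts" using Node.prems(5) c by auto
    then obtain c' where c': "c' \<in> set ts" "t \<in> subtrees c'" using Node.prems(2) by auto
    have "c' = c"
      using child_eq_if_common_leaf[OF Node.prems(1) c'(1) c(1)] leafset_subtree[OF c'(2)] x c(2)
      by auto
    moreover have "distinct (leaves c)" using Node.prems(1) c(1) by (auto simp: distinct_concat_iff)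
    ultimately have "t \<in> subtrees (lca c X)" using Node c c' by auto
    then show ?thesis using lca_child[OF Node.prems(1) c] x by fastforce
  next
    case False
    then show ?thesis using lca_root Node.prems(2,3) by metis
  qed
qed

lemma edge_lca_eq_lca:
  assumes "card e = 2"
  shows "edge_lca T e = lca T e"
proof -
  have "lca_subtree T u v = lca T {u, v}" for u v
    unfolding lca_subtree_def lca_def is_lca_def by simp
  then show ?thesis
    unfolding edge_lca_def using assms by (intro the_equality) (auto simp: card_2_iff)
qed

lemma union_between_thirds_of_small_sets:
  assumes "\<forall>X\<in>set Xs. 3 * card X < m" "m \<le> 3 * card (\<Union>(set Xs))"
  shows "\<exists>C\<subseteq>set Xs. m \<le> 3 * card (\<Union>C) \<and> 3 * card (\<Union>C) \<le> 2 * m"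
  using assms
proof (induction Xs)
  case Nil
  then show ?case by auto
next
  case (Cons X Xs)
  show ?case
  proof (cases "m \<le> 3 * card (\<Union>(set Xs))")
    case True
    then show ?thesis using Cons by (meson set_subset_Cons subset_trans list.set_intros(2))
  next
    case False
    have "card (\<Union>(set (X # Xs))) \<le> card X + card (\<Union>(set Xs))"
      by (simp add: card_Un_le)
    then show ?thesis using Cons.prems False by (intro exI[of _ "set (X # Xs)"]) auto
  qed
qed

lemma union_between_thirds:
  assumes "\<forall>X\<in>set Xs. 3 * card X \<le> 2 * m" "m \<le> 3 * card (\<Union>(set Xs))"
  shows "\<exists>C\<subseteq>set Xs. m \<le> 3 * card (\<Union>C) \<and> 3 * card (\<Union>C) \<le> 2 * m"
proof (cases "\<exists>X\<in>set Xs. m \<le> 3 * card X")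
  case True
  then obtain X where "X \<in> set Xs" "m \<le> 3 * card X" by auto
  then show ?thesis using assms(1) by (intro exI[of _ "{X}"]) auto
next
  case False
  then show ?thesis using union_between_thirds_of_small_sets assms(2) by (simp add: not_le)
qed

lemma balanced_third_iff:
  assumes "finite S" "A \<subseteq> S"
  shows "balanced (1/3) A (S - A) \<longleftrightarrow> card S \<le> 3 * card A \<and> 3 * card A \<le> 2 * card S"
proof -
  have "card (S - A) = card S - card A" "card A \<le> card S"
    using assms by (auto simp: card_Diff_subset finite_subset card_mono)
  moreover have "A \<union> (S - A) = S" using assms(2) by auto
  ultimately show ?thesis unfolding balanced_def by auto
qed

lemma balanced_split_with_far_crossings:
  assumes dist: "distinct (leaves T)" and two: "2 \<le> card S"
  shows "t \<in> subtrees T \<Longrightarrow> 2 * card S < 3 * card (S \<inter> leafset t) \<Longrightarrow>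
    \<exists>A\<subseteq>S. card S \<le> 3 * card A \<and> 3 * card A \<le> 2 * card S \<and>
      (\<forall>e\<subseteq>leafset T. e \<inter> A \<noteq> {} \<longrightarrow> e \<inter> (S - A) \<noteq> {} \<longrightarrow>
         2 * card S < 3 * card (leafset (lca T e)))"
proof (induction t)
  case (Leaf x)
  have "card (S \<inter> leafset (Leaf x)) \<le> 1" by (simp add: card_le_Suc0_iff_eq)
  then show ?case using Leaf.prems two by linarith
next
  case (Node cs)
  let ?m = "card S"
  show ?case
  proof (cases "\<exists>c\<in>set cs. 2 * ?m < 3 * card (S \<inter> leafset c)")
    case True
    then obtain c where c: "c \<in> set cs" "2 * ?m < 3 * card (S \<inter> leafset c)" by auto
    have "c \<in> subtrees T" using subtrees_trans[OF Node.prems(1)] c(1) subtrees_self[of c] by auto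
    then show ?thesis using Node.IH[OF c(1)] c(2) by blast
  next
    case False
    let ?Xs = "map (\<lambda>c. S \<inter> leafset c) cs"
    have "\<Union>(set ?Xs) = S \<inter> leafset (Node cs)" by auto
    then obtain C where C: "C \<subseteq> set ?Xs" "?m \<le> 3 * card (\<Union>C)" "3 * card (\<Union>C) \<le> 2 * ?m"
      using union_between_thirds[of ?Xs ?m] False Node.prems(2) by fastforce
    have far: "2 * ?m < 3 * card (leafset (lca T e))"
      if e: "e \<subseteq> leafset T" "e \<inter> \<Union>C \<noteq> {}" "e \<inter> (S - \<Union>C) \<noteq> {}" for e
    proof -
      obtain a c0 where a: "a \<in> e" "a \<in> S" "a \<in> leafset c0" "c0 \<in> set cs" "S \<inter> leafset c0 \<in> C"
        using e(2) C(1) by fastforce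
      obtain b where b: "b \<in> e" "b \<in> S" "b \<notin> \<Union>C" using e(3) by auto
      have dN: "distinct (leaves (Node cs))" using distinct_leaves_subtree[OF Node.prems(1) dist] .
      have "\<not> e \<subseteq> leafset c" if "c \<in> set cs" for c
      proof
        assume "e \<subseteq> leafset c"
        then have "c = c0" using child_eq_if_common_leaf[OF dN that a(4)] a by auto
        then show False using \<open>e \<subseteq> leafset c\<close> a(5) b by auto
      qed
      then have "Node cs \<in> subtrees (lca T e)"
        using subtree_lca[OF dist Node.prems(1) e(1)] a by fastforce
      then have "card (S \<inter> leafset (Node cs)) \<le> card (leafset (lca T e))"
        by (meson card_mono finite_set inf_le2 leafset_subtree order_trans)
      then show ?thesis using Node.prems(2) by linarith
    qed
    have "\<Union>C \<subseteq> S" using C(1) by auto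
    then show ?thesis using C(2,3) far by blast
  qed
qed

definition within_cost :: "'a set set \<Rightarrow> ('a set \<Rightarrow> real) \<Rightarrow> 'a hctree \<Rightarrow> real" where
  "within_cost E w T = (\<Sum>e\<in>E. if e \<subseteq> leafset T then w e * real (card (leafset (lca T e))) else 0)"

definition far_weight :: "'a set set \<Rightarrow> ('a set \<Rightarrow> real) \<Rightarrow> 'a hctree \<Rightarrow> 'a set \<Rightarrow> real" where
  "far_weight E w T S =
     (\<Sum>e\<in>E. if e \<subseteq> S \<and> 2 * card S < 3 * card (leafset (lca T e)) then w e else 0)"

definition cost_budget :: "'a set set \<Rightarrow> ('a set \<Rightarrow> real) \<Rightarrow> 'a hctree \<Rightarrow> 'a set \<Rightarrow> real" where
  "cost_budget E w T S =
     (\<Sum>e\<in>E. if e \<subseteq> S then w e * real (min (3 * card S) (9 * card (leafset (lca T e)))) else 0)"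

lemma not_subset_if_card_lt_2: "card e = 2 \<Longrightarrow> finite S \<Longrightarrow> card S < 2 \<Longrightarrow> \<not> e \<subseteq> S"
  using card_mono[of S e] by linarith

lemma crosses_iff_two_set:
  assumes "card e = 2" "S1 \<inter> S2 = {}"
  shows "e \<inter> S1 \<noteq> {} \<and> e \<inter> S2 \<noteq> {} \<longleftrightarrow> e \<subseteq> S1 \<union> S2 \<and> \<not> e \<subseteq> S1 \<and> \<not> e \<subseteq> S2"
  using assms by (auto simp: card_2_iff)

lemma cut_weight_eq_sum_if:
  "finite E \<Longrightarrow> cut_weight E w A B = (\<Sum>e\<in>E. if e \<inter> A \<noteq> {} \<and> e \<inter> B \<noteq> {} then w e else 0)"
  unfolding cut_weight_def by (rule sum.inter_filter)

lemma within_cost_Node: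
  assumes E: "finite E" "\<forall>e\<in>E. card e = 2" and dist: "distinct (leaves (Node [t1, t2]))"
  shows "within_cost E w (Node [t1, t2]) = within_cost E w t1 + within_cost E w t2
           + card (leafset (Node [t1, t2])) * cut_weight E w (leafset t1) (leafset t2)"
proof -
  let ?T = "Node [t1, t2]" and ?S1 = "leafset t1" and ?S2 = "leafset t2"
  have disj: "?S1 \<inter> ?S2 = {}" using dist by auto
  have pointwise: "(if e \<subseteq> leafset ?T then w e * card (leafset (lca ?T e)) else 0)
      = (if e \<subseteq> ?S1 then w e * card (leafset (lca t1 e)) else 0)
        + (if e \<subseteq> ?S2 then w e * card (leafset (lca t2 e)) else 0)
        + card (leafset ?T) * (if e \<inter> ?S1 \<noteq> {} \<and> e \<inter> ?S2 \<noteq> {} then w e else 0)"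
    if "e \<in> E" for e
  proof -
    have e2: "card e = 2" using E that by auto
    then have ne: "e \<noteq> {}" by auto
    consider "e \<subseteq> ?S1" | "e \<subseteq> ?S2" | "\<not> e \<subseteq> ?S1" "\<not> e \<subseteq> ?S2" by blast
    then show ?thesis
    proof cases
      case 1
      then show ?thesis using lca_child[OF dist _ 1 ne] disj ne by auto
    next
      case 2
      then show ?thesis using lca_child[OF dist _ 2 ne] disj ne by auto
    next
      case 3
      then show ?thesis using lca_root[of e "[t1, t2]"] crosses_iff_two_set[OF e2 disj] by auto
    qed
  qed
  then show ?thesis
    unfolding within_cost_def cut_weight_eq_sum_if[OF E(1)] sum_distrib_left sum.distrib[symmetric]
    by (rule sum.cong[OF refl])
qed

lemma balanced_cut_le_far_weight:
  assumes E: "\<forall>e\<in>E. card e = 2 \<and> 0 \<le> w e" "finite E"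
    and dist: "distinct (leaves T)" and sub: "S \<subseteq> leafset T" and two: "2 \<le> card S"
  shows "\<exists>A\<subseteq>S. balanced (1/3) A (S - A) \<and> cut_weight E w A (S - A) \<le> far_weight E w T S"
proof -
  have "finite S" using two card.infinite by fastforce
  have "2 * card S < 3 * card (S \<inter> leafset T)" using sub two by (simp add: Int_absorb2)
  then obtain A where A: "A \<subseteq> S" "card S \<le> 3 * card A" "3 * card A \<le> 2 * card S"
    and far: "\<forall>e\<subseteq>leafset T. e \<inter> A \<noteq> {} \<longrightarrow> e \<inter> (S - A) \<noteq> {} \<longrightarrow>
                2 * card S < 3 * card (leafset (lca T e))"
    using balanced_split_with_far_crossings[OF dist two subtrees_self] by blast
  have "cut_weight E w A (S - A) \<le> far_weight E w T S"
    unfolding cut_weight_eq_sum_if[OF E(2)] far_weight_def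
  proof (rule sum_mono)
    fix e assume "e \<in> E"
    then have e: "card e = 2" "0 \<le> w e" using E(1) by auto
    have "e \<subseteq> S" if "e \<inter> A \<noteq> {}" "e \<inter> (S - A) \<noteq> {}"
      using crosses_iff_two_set[OF e(1), of A "S - A"] that A(1) by auto
    then show "(if e \<inter> A \<noteq> {} \<and> e \<inter> (S - A) \<noteq> {} then w e else 0)
        \<le> (if e \<subseteq> S \<and> 2 * card S < 3 * card (leafset (lca T e)) then w e else 0)"
      using far sub e(2) by auto
  qed
  then show ?thesis using A balanced_third_iff[OF \<open>finite S\<close> A(1)] by blast
qed

lemma min_budget_absorbs_far:
  fixes m m' L :: nat
  assumes "3 * m' \<le> 2 * m"
  shows "min (3 * m') (9 * L) + (if 2 * m < 3 * L then m else 0) \<le> min (3 * m) (9 * L)"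
  using assms by auto

lemma weighted_budget_absorbs_far:
  fixes m m' L :: nat and x :: real
  assumes "0 \<le> x" "3 * m' \<le> 2 * m"
  shows "x * real (min (3 * m') (9 * L)) + real m * (if 2 * m < 3 * L then x else 0)
           \<le> x * real (min (3 * m) (9 * L))"
proof -
  have "x * real (min (3 * m') (9 * L)) + real m * (if 2 * m < 3 * L then x else 0)
      = x * real (min (3 * m') (9 * L) + (if 2 * m < 3 * L then m else 0))"
    by (simp add: algebra_simps)
  also have "\<dots> \<le> x * real (min (3 * m) (9 * L))"
    using min_budget_absorbs_far[OF assms(2), of L] assms(1) by (intro mult_left_mono) linarith+
  finally show ?thesis .
qed

lemma cost_budget_Un:
  assumes E: "\<forall>e\<in>E. e \<noteq> {} \<and> 0 \<le> w e" and disj: "S1 \<inter> S2 = {}"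
    and bal: "3 * card S1 \<le> 2 * card (S1 \<union> S2)" "3 * card S2 \<le> 2 * card (S1 \<union> S2)"
  shows "cost_budget E w T S1 + cost_budget E w T S2 + card (S1 \<union> S2) * far_weight E w T (S1 \<union> S2)
           \<le> cost_budget E w T (S1 \<union> S2)"
proof -
  let ?S = "S1 \<union> S2" and ?L = "\<lambda>e. card (leafset (lca T e))"
  have "(if e \<subseteq> S1 then w e * real (min (3 * card S1) (9 * ?L e)) else 0)
      + (if e \<subseteq> S2 then w e * real (min (3 * card S2) (9 * ?L e)) else 0)
      + card ?S * (if e \<subseteq> ?S \<and> 2 * card ?S < 3 * ?L e then w e else 0)
      \<le> (if e \<subseteq> ?S then w e * real (min (3 * card ?S) (9 * ?L e)) else 0)" if "e \<in> E" for e
  proof -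
    have e: "e \<noteq> {}" "0 \<le> w e" using E that by auto
    consider "e \<subseteq> S1" | "e \<subseteq> S2" | "e \<subseteq> ?S" "\<not> e \<subseteq> S1" "\<not> e \<subseteq> S2" | "\<not> e \<subseteq> ?S"
      by blast
    then show ?thesis
    proof cases
      case 1
      then show ?thesis using weighted_budget_absorbs_far[OF e(2) bal(1)] disj e(1) by auto
    next
      case 2
      then show ?thesis using weighted_budget_absorbs_far[OF e(2) bal(2)] disj e(1) by auto
    next
      case 3
      then show ?thesis using weighted_budget_absorbs_far[OF e(2), of 0] by auto
    qed auto
  qed
  then show ?thesis
    unfolding cost_budget_def far_weight_def sum_distrib_left sum.distrib[symmetric]
    by (rule sum_mono)
qed

lemma within_cost_le_cost_budget:
  assumes E: "finite E" "\<forall>e\<in>E. card e = 2 \<and> 0 \<le> w e" and dist_Ts: "distinct (leaves Ts)"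
  shows "bal_mincut_tree (1/3) E w T \<Longrightarrow> distinct (leaves T) \<Longrightarrow> leafset T \<subseteq> leafset Ts \<Longrightarrow>
    within_cost E w T \<le> cost_budget E w Ts (leafset T)"
proof (induction T)
  case (Leaf x)
  have "\<forall>e\<in>E. \<not> e \<subseteq> {x}" using E(2) not_subset_if_card_lt_2[of _ "{x}"] by auto
  then show ?case by (simp add: within_cost_def cost_budget_def)
next
  case (Node ts)
  obtain t1 t2 where ts: "ts = [t1, t2]" using Node.prems(1) by (auto split: list.splits)
  define S1 S2 where "S1 = leafset t1" and "S2 = leafset t2"
  define S where "S = S1 \<union> S2"
  have leafset_Node_eq: "leafset (Node ts) = S" by (simp add: ts S_def S1_def S2_def)
  have disj: "S1 \<inter> S2 = {}" using Node.prems(2) by (auto simp: ts S1_def S2_def)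
  have bal: "balanced (1/3) S1 S2"
    and min_cut: "\<And>A B. A \<inter> B = {} \<Longrightarrow> A \<union> B = S \<Longrightarrow> balanced (1/3) A B \<Longrightarrow>
                     cut_weight E w S1 S2 \<le> cut_weight E w A B"
    using Node.prems(1) by (auto simp: ts S1_def S2_def S_def)
  have thirds: "3 * card S1 \<le> 2 * card S" "3 * card S2 \<le> 2 * card S"
    using bal by (auto simp: balanced_def S_def)
  have IH: "within_cost E w t \<le> cost_budget E w Ts (leafset t)" if "t \<in> set ts" for t
    using Node.IH[OF that] Node.prems that by (auto simp: ts distinct_concat_iff)
  have cut_far: "cut_weight E w S1 S2 \<le> far_weight E w Ts S"
  proof (cases "2 \<le> card S")
    case True
    then obtain A where "A \<subseteq> S" "balanced (1/3) A (S - A)" "cut_weight E w A (S - A) \<le> far_weight E w Ts S"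
      using balanced_cut_le_far_weight[OF E(2,1) dist_Ts] Node.prems(3) leafset_Node_eq by blast
    then show ?thesis using min_cut[of A "S - A"] by fastforce
  next
    case False
    have no_crossing: "{e\<in>E. e \<inter> S1 \<noteq> {} \<and> e \<inter> S2 \<noteq> {}} = {}"
      using crosses_iff_two_set[OF _ disj] not_subset_if_card_lt_2[of _ S] E(2) False
      by (fastforce simp: S_def S1_def S2_def)
    then have "cut_weight E w S1 S2 = 0" by (simp only: cut_weight_def no_crossing sum.empty)
    moreover have "0 \<le> far_weight E w Ts S" unfolding far_weight_def using E(2) by (intro sum_nonneg) auto
    ultimately show ?thesis by simp
  qed
  have "within_cost E w (Node ts) = within_cost E w t1 + within_cost E w t2 + card S * cut_weight E w S1 S2"
    using within_cost_Node[of E t1 t2 w] E Node.prems(2) leafset_Node_eq by (simp add: ts S1_def S2_def)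
  also have "\<dots> \<le> cost_budget E w Ts S1 + cost_budget E w Ts S2 + card S * far_weight E w Ts S"
    using IH[of t1] IH[of t2] cut_far by (intro add_mono mult_left_mono) (simp_all add: ts S1_def S2_def)
  also have "\<dots> \<le> cost_budget E w Ts S"
    using cost_budget_Un[OF _ disj] thirds E(2) by (fastforce simp: S_def)
  finally show ?case unfolding leafset_Node_eq .
qed

lemma hc_cost_eq_sum_lca:
  "\<forall>e\<in>E. card e = 2 \<Longrightarrow> hc_cost E w T = (\<Sum>e\<in>E. w e * real (card (leafset (lca T e))))"
  unfolding hc_cost_def by (intro sum.cong) (simp_all add: edge_lca_eq_lca)

lemma hc_cost_bal_mincut_le_9:
  assumes G: "wgraph V E w" and T: "hc_tree V T" "bal_mincut_tree (1/3) E w T" and Ts: "hc_tree V Ts"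
  shows "hc_cost E w T \<le> 9 * hc_cost E w Ts"
proof -
  have E: "\<forall>e\<in>E. card e = 2 \<and> 0 \<le> w e" "\<forall>e\<in>E. e \<subseteq> V" and "finite V"
    using G by (auto simp: wgraph_def)
  then have "finite E" using finite_subset[of E "Pow V"] by auto
  have V: "leafset T = V" "leafset Ts = V" "distinct (leaves T)" "distinct (leaves Ts)"
    using T(1) Ts by (auto simp: hc_tree_def)
  have "hc_cost E w T = within_cost E w T"
    using E V(1) by (auto simp: hc_cost_eq_sum_lca within_cost_def intro: sum.cong)
  also have "\<dots> \<le> cost_budget E w Ts V"
    using within_cost_le_cost_budget[OF \<open>finite E\<close> E(1) V(4) T(2) V(3)] V by simp
  also have "\<dots> \<le> (\<Sum>e\<in>E. 9 * (w e * real (card (leafset (lca Ts e)))))"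
    unfolding cost_budget_def
  proof (rule sum_mono)
    fix e assume "e \<in> E"
    then have "0 \<le> w e" "e \<subseteq> V" using E by auto
    then have "w e * real (min (3 * card V) (9 * card (leafset (lca Ts e))))
        \<le> w e * (9 * real (card (leafset (lca Ts e))))"
      by (intro mult_left_mono) simp_all
    then show "(if e \<subseteq> V then w e * real (min (3 * card V) (9 * card (leafset (lca Ts e)))) else 0)
        \<le> 9 * (w e * real (card (leafset (lca Ts e))))"
      using \<open>e \<subseteq> V\<close> by (simp add: algebra_simps)
  qed
  also have "\<dots> = 9 * hc_cost E w Ts"
    using E by (simp add: hc_cost_eq_sum_lca sum_distrib_left)
  finally show ?thesis .
qed

theorem lemma2p5:
  fixes V :: "'a set" and E :: "'a set set" and w :: "'a set \<Rightarrow> real"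
    and T_bal :: "'a hctree"
  assumes "wgraph V E w"
    and "hc_tree V T_bal"
    and "bal_mincut_tree (1/3) E w T_bal"
  shows "hc_cost E w T_bal \<le> 9 * OPT V E w"
proof -
  have "hc_cost E w T_bal / 9 \<le> OPT V E w"
    unfolding OPT_def
  proof (rule cINF_greatest)
    show "{T. hc_tree V T} \<noteq> {}" using assms(2) by auto
    fix Ts assume "Ts \<in> {T. hc_tree V T}"
    then have "hc_cost E w T_bal \<le> 9 * hc_cost E w Ts"
      using hc_cost_bal_mincut_le_9[OF assms] by simp
    then show "hc_cost E w T_bal / 9 \<le> hc_cost E w Ts" by linarith
  qed
  then show ?thesis by simp
qed

end
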